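(* Let $f: X \to Y$ be an open perfect surjection (continuous, closed, with compact fibers) onto a set star Hurewicz space $Y$. Then $X$ is nearly set star Hurewicz.
   Context: For a subset $A$ of a space $X$ and a collection $\mathcal{U}$ of subsets of $X$, ${\rm St}(A,\mathcal{U}) = \bigcup\{U \in \mathcal{U}: U \cap A \neq \emptyset\}$. A space $Y$ is set star Hurewicz if for each nonempty $B \subset Y$ and each sequence $(\mathcal{V}_n: n\in\mathbb{N})$ of collections of sets open in $Y$ with $\overline{B} \subset \bigcup\mathcal{V}_n$ for all $n$, there are finite $\mathcal{W}_n \subset \mathcal{V}_n$ such that each $y \in B$ lies in ${\rm St}(\bigcup\mathcal{W}_n,\mathcal{V}_n)$ for all but finitely many $n$. A space $X$ is nearly set star Hurewicz if for each nonempty $A \subset X$ and each sequence $(\mathcal{U}_n: n\in\mathbb{N})$ of open covers of $X$ there are finite $\mathcal{V}_n \subset \mathcal{U}_n$ such that each $x \in A$ lies in ${\rm St}(\bigcup\mathcal{V}_n,\mathcal{U}_n)$ for all but finitely many $n$. *)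

theory Defs
  imports "HOL-Analysis.Analysis"
begin

definition star :: "'a set \<Rightarrow> 'a set set \<Rightarrow> 'a set" where
  "star A \<U> = \<Union>{U \<in> \<U>. U \<inter> A \<noteq> {}}"

definition set_star_Hurewicz :: "'a topology \<Rightarrow> bool" where
  "set_star_Hurewicz Y \<longleftrightarrow>
     (\<forall>B \<V>. B \<noteq> {} \<and> B \<subseteq> topspace Y \<and>
        (\<forall>n. (\<forall>V \<in> \<V> n. openin Y V) \<and> Y closure_of B \<subseteq> \<Union>(\<V> n)) \<longrightarrow>
        (\<exists>\<W>. (\<forall>n. finite (\<W> n) \<and> \<W> n \<subseteq> \<V> n) \<and>
             (\<forall>y \<in> B. eventually (\<lambda>n. y \<in> star (\<Union>(\<W> n)) (\<V> n)) sequentially)))"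

definition nearly_set_star_Hurewicz :: "'a topology \<Rightarrow> bool" where
  "nearly_set_star_Hurewicz X \<longleftrightarrow>
     (\<forall>A \<U>. A \<noteq> {} \<and> A \<subseteq> topspace X \<and>
        (\<forall>n. (\<forall>U \<in> \<U> n. openin X U) \<and> \<Union>(\<U> n) = topspace X) \<longrightarrow>
        (\<exists>\<V>. (\<forall>n. finite (\<V> n) \<and> \<V> n \<subseteq> \<U> n) \<and>
             (\<forall>x \<in> A. eventually (\<lambda>n. x \<in> star (\<Union>(\<V> n)) (\<U> n)) sequentially)))"

end

theory Submission
  imports Defs
begin

text \<open>Cover each fibre \<open>f\<^sup>-\<^sup>1(y)\<close> by a finite subfamily \<open>\<F>\<^sub>y\<close> of \<open>\<U>\<^sub>n\<close> whose members all meet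
  the fibre. The points whose whole fibre lies in \<open>\<Union>\<F>\<^sub>y\<close> and which lie in every \<open>f(U)\<close>,
  \<open>U \<in> \<F>\<^sub>y\<close>, form an open neighbourhood \<open>O\<^sub>y\<close> of \<open>y\<close>: the first condition is open because
  \<open>f\<close> is closed, the second because \<open>f\<close> is open. Apply the set star Hurewicz property of \<open>Y\<close>
  to \<open>f(A)\<close> and the covers \<open>{O\<^sub>y}\<close>. If \<open>f(x)\<close> lies in some \<open>O\<^sub>y\<close> meeting a chosen \<open>O\<^sub>s\<close> at \<open>z\<close>,
  then \<open>x\<close> lies in some \<open>U \<in> \<F>\<^sub>y\<close>, and \<open>U\<close> contains a preimage of \<open>z\<close>, which in turn lies in
  \<open>\<Union>\<F>\<^sub>s\<close>; so the finite families \<open>\<F>\<^sub>s\<close> witness that \<open>X\<close> is nearly set star Hurewicz.\<close>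

definition fibre_tube :: "'a topology \<Rightarrow> 'b topology \<Rightarrow> ('a \<Rightarrow> 'b) \<Rightarrow> 'a set set \<Rightarrow> 'b set" where
  "fibre_tube X Y f \<F> =
     {z \<in> topspace Y. (\<forall>x \<in> topspace X. f x = z \<longrightarrow> x \<in> \<Union>\<F>) \<and> (\<forall>U \<in> \<F>. z \<in> f ` U)}"

lemma fibre_tube_eq:
  "fibre_tube X Y f \<F> =
     (topspace Y - f ` (topspace X - \<Union>\<F>)) \<inter> ((\<Inter>U \<in> \<F>. f ` U) \<inter> topspace Y)"
  unfolding fibre_tube_def by blast

lemma openin_fibre_tube:
  assumes "open_map X Y f" and "closed_map X Y f"
    and "finite \<F>" and "\<And>U. U \<in> \<F> \<Longrightarrow> openin X U"
  shows "openin Y (fibre_tube X Y f \<F>)"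
proof -
  have "closedin X (topspace X - \<Union>\<F>)"
    using assms(4) by (simp add: closedin_diff openin_Union)
  then have "openin Y (topspace Y - f ` (topspace X - \<Union>\<F>))"
    using assms(2) by (simp add: closed_map_def openin_diff)
  moreover have "openin Y ((\<Inter>U \<in> \<F>. f ` U) \<inter> topspace Y)"
    using assms(1,3,4) by (simp add: open_map_def openin_INT)
  ultimately show ?thesis
    unfolding fibre_tube_eq by (rule openin_Int)
qed

lemma mem_fibre_tube:
  assumes "y \<in> topspace Y"
    and "{x \<in> topspace X. f x = y} \<subseteq> \<Union>\<F>"
    and "\<forall>U \<in> \<F>. U \<inter> {x \<in> topspace X. f x = y} \<noteq> {}"
  shows "y \<in> fibre_tube X Y f \<F>"
  using assms unfolding fibre_tube_def by blast

lemma compactin_finite_subcover_meeting: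
  assumes "compactin X K" and "\<And>U. U \<in> \<U> \<Longrightarrow> openin X U" and "K \<subseteq> \<Union>\<U>"
  obtains \<F> where "finite \<F>" "\<F> \<subseteq> \<U>" "K \<subseteq> \<Union>\<F>" "\<forall>U \<in> \<F>. U \<inter> K \<noteq> {}"
proof -
  obtain \<F> where "finite \<F>" "\<F> \<subseteq> \<U>" "K \<subseteq> \<Union>\<F>"
    using compactinD[OF assms] by blast
  show thesis
  proof (rule that[of "{U \<in> \<F>. U \<inter> K \<noteq> {}}"])
    show "K \<subseteq> \<Union>{U \<in> \<F>. U \<inter> K \<noteq> {}}"
      using \<open>K \<subseteq> \<Union>\<F>\<close> by blast
  qed (use \<open>finite \<F>\<close> \<open>\<F> \<subseteq> \<U>\<close> in auto)
qed

lemma perfect_map_fibre_tubes: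
  assumes "open_map X Y f" and "perfect_map X Y f"
    and "\<And>U. U \<in> \<U> \<Longrightarrow> openin X U" and "\<Union>\<U> = topspace X"
  obtains \<F> where "\<And>y. y \<in> topspace Y \<Longrightarrow> finite (\<F> y) \<and> \<F> y \<subseteq> \<U>"
    and "\<And>y. y \<in> topspace Y \<Longrightarrow> openin Y (fibre_tube X Y f (\<F> y))"
    and "\<And>y. y \<in> topspace Y \<Longrightarrow> y \<in> fibre_tube X Y f (\<F> y)"
proof -
  have "\<exists>\<F>. finite \<F> \<and> \<F> \<subseteq> \<U> \<and> y \<in> fibre_tube X Y f \<F>" if "y \<in> topspace Y" for y
  proof -
    have fibre_compact: "compactin X {x \<in> topspace X. f x = y}"
      using assms(2) that by (simp add: perfect_map_def proper_map_def)
    have fibre_covered: "{x \<in> topspace X. f x = y} \<subseteq> \<Union>\<U>"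
      using assms(4) by blast
    obtain \<F> where "finite \<F>" "\<F> \<subseteq> \<U>"
      "{x \<in> topspace X. f x = y} \<subseteq> \<Union>\<F>" "\<forall>U \<in> \<F>. U \<inter> {x \<in> topspace X. f x = y} \<noteq> {}"
      by (rule compactin_finite_subcover_meeting[OF fibre_compact assms(3) fibre_covered])
    with that show ?thesis
      by (blast intro: mem_fibre_tube)
  qed
  then obtain \<F> where \<F>: "\<And>y. y \<in> topspace Y \<Longrightarrow>
      finite (\<F> y) \<and> \<F> y \<subseteq> \<U> \<and> y \<in> fibre_tube X Y f (\<F> y)"
    by metis
  have "closed_map X Y f"
    using assms(2) by (simp add: perfect_map_def proper_map_def)
  show thesis
  proof (rule that)
    fix y assume y: "y \<in> topspace Y"
    then show "finite (\<F> y) \<and> \<F> y \<subseteq> \<U>" "y \<in> fibre_tube X Y f (\<F> y)"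
      using \<F> by auto
    show "openin Y (fibre_tube X Y f (\<F> y))"
      using \<F>[OF y] by (intro openin_fibre_tube[OF assms(1) \<open>closed_map X Y f\<close>] assms(3)) auto
  qed
qed

lemma star_fibre_tube_pullback:
  assumes "\<And>y. y \<in> S \<Longrightarrow> \<F> y \<subseteq> \<U>" and "\<And>U. U \<in> \<U> \<Longrightarrow> U \<subseteq> topspace X"
    and "T \<subseteq> S" and "x \<in> topspace X"
    and "f x \<in> star (\<Union>((\<lambda>y. fibre_tube X Y f (\<F> y)) ` T)) ((\<lambda>y. fibre_tube X Y f (\<F> y)) ` S)"
  shows "x \<in> star (\<Union>(\<Union>(\<F> ` T))) \<U>"
proof -
  obtain y z s where y: "y \<in> S" "f x \<in> fibre_tube X Y f (\<F> y)" "z \<in> fibre_tube X Y f (\<F> y)"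
    and s: "s \<in> T" "z \<in> fibre_tube X Y f (\<F> s)"
    using assms(5) unfolding star_def by blast
  obtain U where U: "U \<in> \<F> y" "x \<in> U"
    using y(2) assms(4) unfolding fibre_tube_def by blast
  then obtain w where w: "w \<in> U" "f w = z"
    using y(3) unfolding fibre_tube_def by blast
  have "U \<in> \<U>"
    using U(1) assms(1)[OF y(1)] by blast
  then have "w \<in> topspace X"
    using w(1) assms(2) by blast
  then have "w \<in> \<Union>(\<Union>(\<F> ` T))"
    using s w(2) unfolding fibre_tube_def by blast
  then show ?thesis
    using \<open>U \<in> \<U>\<close> U(2) w(1) unfolding star_def by blast
qed

lemma set_star_Hurewicz_neighbourhood_assignment:
  assumes "set_star_Hurewicz Y" and "B \<noteq> {}" and "B \<subseteq> topspace Y"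
    and "\<And>n y. y \<in> topspace Y \<Longrightarrow> openin Y (N n y)"
    and "\<And>n y. y \<in> topspace Y \<Longrightarrow> y \<in> N n y"
  obtains T where "\<And>n. finite (T n)" and "\<And>n. T n \<subseteq> topspace Y"
    and "\<forall>y \<in> B. eventually (\<lambda>n. y \<in> star (\<Union>(N n ` T n)) (N n ` topspace Y)) sequentially"
proof -
  have "Y closure_of B \<subseteq> \<Union>(N n ` topspace Y)" for n
  proof -
    have "topspace Y \<subseteq> \<Union>(N n ` topspace Y)"
      using assms(5) by blast
    then show ?thesis
      using closure_of_subset_topspace by (rule order_trans[rotated])
  qed
  moreover have "\<forall>V \<in> N n ` topspace Y. openin Y V" for n
    using assms(4) by blast
  ultimately obtain \<W> where \<W>: "\<And>n. finite (\<W> n) \<and> \<W> n \<subseteq> N n ` topspace Y"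
    and \<W>_star: "\<forall>y \<in> B. eventually (\<lambda>n. y \<in> star (\<Union>(\<W> n)) (N n ` topspace Y)) sequentially"
    using assms(1)[unfolded set_star_Hurewicz_def, rule_format, of B "\<lambda>n. N n ` topspace Y"] assms(2,3)
    by blast
  have "\<exists>T. finite T \<and> T \<subseteq> topspace Y \<and> \<W> n = N n ` T" for n
    using \<W> finite_subset_image by metis
  then obtain T where "\<And>n. finite (T n)" "\<And>n. T n \<subseteq> topspace Y" "\<And>n. \<W> n = N n ` T n"
    by metis
  with \<W>_star show thesis
    by (intro that) auto
qed

theorem theorem3p15:
  fixes X :: "'a topology" and Y :: "'b topology" and f :: "'a \<Rightarrow> 'b"
  assumes "open_map X Y f" and "perfect_map X Y f"
    and "set_star_Hurewicz Y"
  shows "nearly_set_star_Hurewicz X"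
  unfolding nearly_set_star_Hurewicz_def
proof (intro allI impI)
  fix A and \<U> :: "nat \<Rightarrow> 'a set set"
  assume "A \<noteq> {} \<and> A \<subseteq> topspace X \<and> (\<forall>n. (\<forall>U \<in> \<U> n. openin X U) \<and> \<Union>(\<U> n) = topspace X)"
  then have A: "A \<noteq> {}" "A \<subseteq> topspace X" and \<U>_open: "\<And>n U. U \<in> \<U> n \<Longrightarrow> openin X U"
    and \<U>_cover: "\<And>n. \<Union>(\<U> n) = topspace X"
    by auto
  have "\<exists>\<F>. \<forall>y \<in> topspace Y. finite (\<F> y) \<and> \<F> y \<subseteq> \<U> n \<and>
      openin Y (fibre_tube X Y f (\<F> y)) \<and> y \<in> fibre_tube X Y f (\<F> y)" for n
    using perfect_map_fibre_tubes[OF assms(1,2) \<U>_open[where n=n] \<U>_cover[of n]] by metis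
  then obtain \<F> where \<F>: "\<And>n y. y \<in> topspace Y \<Longrightarrow> finite (\<F> n y) \<and> \<F> n y \<subseteq> \<U> n"
    and tube_open: "\<And>n y. y \<in> topspace Y \<Longrightarrow> openin Y (fibre_tube X Y f (\<F> n y))"
    and tube_mem: "\<And>n y. y \<in> topspace Y \<Longrightarrow> y \<in> fibre_tube X Y f (\<F> n y)"
    by metis
  have image_A: "f ` A \<noteq> {}" "f ` A \<subseteq> topspace Y"
    using assms(2) A by (auto simp: perfect_map_def dest!: continuous_map_image_subset_topspace)
  obtain T where T: "\<And>n. finite (T n)" "\<And>n. T n \<subseteq> topspace Y"
    and star_image: "\<forall>y \<in> f ` A. eventually (\<lambda>n. y \<in> star (\<Union>((\<lambda>y. fibre_tube X Y f (\<F> n y)) ` T n))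
          ((\<lambda>y. fibre_tube X Y f (\<F> n y)) ` topspace Y)) sequentially"
    using set_star_Hurewicz_neighbourhood_assignment[where N = "\<lambda>n y. fibre_tube X Y f (\<F> n y)",
          OF assms(3) image_A tube_open tube_mem] by blast
  show "\<exists>\<V>. (\<forall>n. finite (\<V> n) \<and> \<V> n \<subseteq> \<U> n) \<and>
      (\<forall>x \<in> A. eventually (\<lambda>n. x \<in> star (\<Union>(\<V> n)) (\<U> n)) sequentially)"
  proof (intro exI[of _ "\<lambda>n. \<Union>(\<F> n ` T n)"] conjI allI ballI)
    fix n
    show "finite (\<Union>(\<F> n ` T n))" "\<Union>(\<F> n ` T n) \<subseteq> \<U> n"
      using T \<F> by blast+
  next
    fix x assume "x \<in> A"
    then have "x \<in> topspace X"
      using A(2) by blast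
    have "eventually (\<lambda>n. f x \<in> star (\<Union>((\<lambda>y. fibre_tube X Y f (\<F> n y)) ` T n))
        ((\<lambda>y. fibre_tube X Y f (\<F> n y)) ` topspace Y)) sequentially"
      using star_image \<open>x \<in> A\<close> by blast
    then show "eventually (\<lambda>n. x \<in> star (\<Union>(\<Union>(\<F> n ` T n))) (\<U> n)) sequentially"
    proof (rule eventually_mono)
      fix n
      assume fx: "f x \<in> star (\<Union>((\<lambda>y. fibre_tube X Y f (\<F> n y)) ` T n))
          ((\<lambda>y. fibre_tube X Y f (\<F> n y)) ` topspace Y)"
      show "x \<in> star (\<Union>(\<Union>(\<F> n ` T n))) (\<U> n)"
        by (rule star_fibre_tube_pullback[OF _ openin_subset[OF \<U>_open] T(2) \<open>x \<in> topspace X\<close> fx])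
          (use \<F> in blast)
    qed
  qed
qed

end
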